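(* For every positive integer $m$, $$\zeta(m,1)=2^{\lfloor (m-1)/2\rfloor},\qquad \zeta(m,2)=3^{\lfloor (m-1)/2\rfloor},$$ $$\zeta(m,3)=\frac{(2+\sqrt2)^{\lfloor (m+1)/2\rfloor}+(2-\sqrt2)^{\lfloor (m+1)/2\rfloor}}{4},$$ $$\zeta(m,4)=\frac{\big(\tfrac{5+\sqrt5}{2}\big)^{\lfloor (m+1)/2\rfloor}+\big(\tfrac{5-\sqrt5}{2}\big)^{\lfloor (m+1)/2\rfloor}}{5},$$ $$\zeta(m,5)=\frac{(2+\sqrt3)^{\lfloor (m+1)/2\rfloor}+(2-\sqrt3)^{\lfloor (m+1)/2\rfloor}+2^{\lfloor (m+1)/2\rfloor}}{6}.$$
   Context: For positive integers $m$ and $\delta$, a $\delta$-deviation set of size $m$ is a finite sequence $(\alpha_1,\alpha_2,\dots,\alpha_\ell)$ of positive integers such that (i) $\sum_i\alpha_i=m$; (ii) $\big|\sum_i\alpha_{2i-1}-\sum_i\alpha_{2i}\big|\le 1$; (iii) $\big|\sum_{1\le i\le j}(-1)^{i-1}\alpha_i\big|\le\delta$ for every $j\ge 1$. $\zeta(m,\delta)$ denotes the number of $\delta$-deviation sets of size $m$. *)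

theory Defs
  imports Complex_Main
begin

text \<open>Alternating sum of the first j entries: sum of (-1)^(i-1) alpha_i for 1 <= i <= j
  (0-indexed: entry i carries sign (-1)^i).\<close>
definition alt_prefix :: "nat list \<Rightarrow> nat \<Rightarrow> int" where
  "alt_prefix xs j = (\<Sum>i<min j (length xs). (-1)^i * int (xs ! i))"

definition deviation_set :: "nat \<Rightarrow> nat \<Rightarrow> nat list \<Rightarrow> bool" where
  "deviation_set m \<delta> xs \<longleftrightarrow>
     (\<forall>a\<in>set xs. 0 < a) \<and>
     sum_list xs = m \<and>
     \<bar>alt_prefix xs (length xs)\<bar> \<le> 1 \<and>
     (\<forall>j\<ge>1. \<bar>alt_prefix xs j\<bar> \<le> int \<delta>)"

definition zeta :: "nat \<Rightarrow> nat \<Rightarrow> nat" where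
  "zeta m \<delta> = card {xs. deviation_set m \<delta> xs}"

end

theory Submission
  imports Defs
begin

text \<open>Read a composition of m one unit at a time. The alternating sum moves by 1 per
  unit and reverses direction exactly when a new part starts. Multiplying it by the sign of
  the current part turns this into a walk of m - 1 steps of \<plusminus>1 from 1 (+1: the part
  continues, -1: a new part starts), and the deviation bounds say that the walk stays in
  [-\<delta>, \<delta>] and ends in [-1, 1]. For \<delta> \<le> 5 the transfer matrix of these walks
  gives a linear recurrence in steps of two, and the closed forms are the power sums of its
  characteristic roots.\<close>

fun bounded_walks :: "nat \<Rightarrow> nat \<Rightarrow> int \<Rightarrow> nat" where
  "bounded_walks d 0 p = (if \<bar>p\<bar> \<le> 1 \<and> \<bar>p\<bar> \<le> int d then 1 else 0)"
| "bounded_walks d (Suc n) p =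
    (if \<bar>p\<bar> \<le> int d then bounded_walks d n (p + 1) + bounded_walks d n (p - 1) else 0)"

lemma bounded_walks_uminus [simp]: "bounded_walks d n (- p) = bounded_walks d n p"
proof (induction n arbitrary: p)
  case (Suc n)
  have "bounded_walks d n (- p + 1) = bounded_walks d n (p - 1)"
    and "bounded_walks d n (- p - 1) = bounded_walks d n (p + 1)"
    using Suc.IH[of "p - 1"] Suc.IH[of "p + 1"] by simp_all
  then show ?case by simp
qed simp

lemma bounded_walks_outside: "int d < \<bar>p\<bar> \<Longrightarrow> bounded_walks d n p = 0"
  by (cases n) auto

text \<open>The deviation conditions with all alternating sums shifted by s; after a first
  part a the signs of the remaining parts flip, so the shift becomes -(s + a).\<close>
fun deviation_from :: "nat \<Rightarrow> int \<Rightarrow> nat list \<Rightarrow> bool" where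
  "deviation_from d s [] \<longleftrightarrow> \<bar>s\<bar> \<le> 1"
| "deviation_from d s (a # xs) \<longleftrightarrow>
    0 < a \<and> \<bar>s + int a\<bar> \<le> int d \<and> deviation_from d (- (s + int a)) xs"

lemma alt_prefix_Nil [simp]: "alt_prefix [] j = 0"
  by (simp add: alt_prefix_def)

lemma alt_prefix_0 [simp]: "alt_prefix xs 0 = 0"
  by (simp add: alt_prefix_def)

lemma alt_prefix_Cons_Suc: "alt_prefix (a # xs) (Suc j) = int a - alt_prefix xs j"
proof -
  have "min (Suc j) (length (a # xs)) = Suc (min j (length xs))" by simp
  then show ?thesis unfolding alt_prefix_def
    by (simp only: sum.lessThan_Suc_shift) (simp add: sum_negf)
qed

lemma deviation_from_iff:
  assumes "1 \<le> d"
  shows "deviation_from d s xs \<longleftrightarrow> (\<forall>a\<in>set xs. 0 < a) \<and>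
    \<bar>s + alt_prefix xs (length xs)\<bar> \<le> 1 \<and> (\<forall>j\<ge>1. \<bar>s + alt_prefix xs j\<bar> \<le> int d)"
proof (induction xs arbitrary: s)
  case Nil
  then show ?case using assms by auto
next
  case (Cons a xs)
  define s' where "s' = - (s + int a)"
  have shift: "\<bar>s + alt_prefix (a # xs) (Suc j)\<bar> = \<bar>s' + alt_prefix xs j\<bar>" for j
    by (simp add: alt_prefix_Cons_Suc s'_def)
  have "(\<forall>j\<ge>1. \<bar>s + alt_prefix (a # xs) j\<bar> \<le> int d) \<longleftrightarrow> (\<forall>j. \<bar>s' + alt_prefix xs j\<bar> \<le> int d)"
    by (metis shift Suc_le_eq Suc_pred' One_nat_def le_add1 plus_1_eq_Suc)
  also have "\<dots> \<longleftrightarrow> \<bar>s + int a\<bar> \<le> int d \<and> (\<forall>j\<ge>1. \<bar>s' + alt_prefix xs j\<bar> \<le> int d)"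
    by (metis abs_minus_cancel add.right_neutral alt_prefix_0 less_one not_le s'_def)
  finally show ?case
    using Cons.IH[of s'] shift[of "length xs"] by (auto simp: s'_def)
qed

definition deviation_sets :: "nat \<Rightarrow> int \<Rightarrow> nat \<Rightarrow> nat list set" where
  "deviation_sets d s m = {xs. deviation_from d s xs \<and> sum_list xs = m}"

lemma deviation_from_pos: "deviation_from d s xs \<Longrightarrow> a \<in> set xs \<Longrightarrow> 0 < a"
  by (induction xs arbitrary: s) auto

lemma finite_deviation_sets: "finite (deviation_sets d s m)"
proof -
  have "length xs \<le> sum_list xs" if "\<forall>a\<in>set xs. 0 < a" for xs :: "nat list"
    using that by (induction xs) auto
  then have "deviation_sets d s m \<subseteq> {xs. set xs \<subseteq> {0..m} \<and> length xs \<le> m}"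
    unfolding deviation_sets_def using deviation_from_pos member_le_sum_list by fastforce
  then show ?thesis
    using finite_lists_length_le[of "{0..m}" m] finite_subset by blast
qed

lemma deviation_sets_1:
  "deviation_sets d s (Suc 0) = (if \<bar>s + 1\<bar> \<le> int d \<and> \<bar>s + 1\<bar> \<le> 1 then {[1]} else {})"
proof -
  have "xs = [1]" if "xs \<in> deviation_sets d s (Suc 0)" for xs
  proof -
    have "sum_list xs = 1" "\<forall>a\<in>set xs. 0 < a"
      using that deviation_from_pos unfolding deviation_sets_def by auto
    then show ?thesis by (cases xs; cases "tl xs") auto
  qed
  then have "deviation_sets d s (Suc 0) \<subseteq> {[1]}" by blast
  moreover have "[1] \<in> deviation_sets d s (Suc 0) \<longleftrightarrow> \<bar>s + 1\<bar> \<le> int d \<and> \<bar>s + 1\<bar> \<le> 1"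
    by (auto simp: deviation_sets_def)
  ultimately show ?thesis by (auto simp: subset_singleton_iff)
qed

definition incr_hd :: "nat list \<Rightarrow> nat list" where
  "incr_hd xs = (hd xs + 1) # tl xs"

lemma deviation_sets_Suc_Suc:
  "deviation_sets d s (Suc (Suc n)) =
     Cons 1 ` (if \<bar>s + 1\<bar> \<le> int d then deviation_sets d (- (s + 1)) (Suc n) else {})
     \<union> incr_hd ` deviation_sets d (s + 1) (Suc n)"
proof (intro set_eqI iffI)
  fix xs assume xs: "xs \<in> deviation_sets d s (Suc (Suc n))"
  then obtain a ys where xs_eq: "xs = a # ys"
    by (cases xs) (auto simp: deviation_sets_def)
  show "xs \<in> Cons 1 ` (if \<bar>s + 1\<bar> \<le> int d then deviation_sets d (- (s + 1)) (Suc n) else {})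
     \<union> incr_hd ` deviation_sets d (s + 1) (Suc n)"
  proof (cases "a = 1")
    case True
    then show ?thesis using xs xs_eq by (auto simp: deviation_sets_def)
  next
    case False
    then have "2 \<le> a" using xs xs_eq by (auto simp: deviation_sets_def)
    then have "(a - 1) # ys \<in> deviation_sets d (s + 1) (Suc n)" and "xs = incr_hd ((a - 1) # ys)"
      using xs xs_eq by (auto simp: deviation_sets_def incr_hd_def algebra_simps)
    then show ?thesis by blast
  qed
next
  fix xs assume "xs \<in> Cons 1 ` (if \<bar>s + 1\<bar> \<le> int d then deviation_sets d (- (s + 1)) (Suc n) else {})
     \<union> incr_hd ` deviation_sets d (s + 1) (Suc n)"
  then consider ys where "xs = 1 # ys" "\<bar>s + 1\<bar> \<le> int d" "ys \<in> deviation_sets d (- (s + 1)) (Suc n)"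
    | ys where "xs = incr_hd ys" "ys \<in> deviation_sets d (s + 1) (Suc n)"
    by (auto split: if_splits)
  then show "xs \<in> deviation_sets d s (Suc (Suc n))"
  proof cases
    case (2 ys)
    then obtain c zs where "ys = c # zs" by (cases ys) (auto simp: deviation_sets_def)
    with 2 show ?thesis by (auto simp: deviation_sets_def incr_hd_def algebra_simps)
  qed (auto simp: deviation_sets_def)
qed

lemma card_deviation_sets_Suc_Suc:
  "card (deviation_sets d s (Suc (Suc n))) =
     (if \<bar>s + 1\<bar> \<le> int d then card (deviation_sets d (- (s + 1)) (Suc n)) else 0)
     + card (deviation_sets d (s + 1) (Suc n))"
proof -
  define A where "A = (if \<bar>s + 1\<bar> \<le> int d then deviation_sets d (- (s + 1)) (Suc n) else {})"
  define B where "B = deviation_sets d (s + 1) (Suc n)"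
  have B_heads: "xs \<noteq> [] \<and> 0 < hd xs" if "xs \<in> B" for xs
    using that unfolding B_def deviation_sets_def by (cases xs) auto
  have "Cons 1 ` A \<inter> incr_hd ` B = {}"
  proof (rule equals0I)
    fix xs assume "xs \<in> Cons 1 ` A \<inter> incr_hd ` B"
    then obtain zs ys where "xs = 1 # zs" "xs = incr_hd ys" "ys \<in> B" by blast
    then show False using B_heads[of ys] by (simp add: incr_hd_def)
  qed
  moreover have "inj_on incr_hd B"
  proof (rule inj_onI)
    fix xs ys assume "xs \<in> B" "ys \<in> B" "incr_hd xs = incr_hd ys"
    then have "hd xs = hd ys" "tl xs = tl ys" "xs \<noteq> []" "ys \<noteq> []"
      using B_heads by (simp_all add: incr_hd_def)
    then show "xs = ys" by (metis list.collapse)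
  qed
  moreover have "finite A" "finite B"
    unfolding A_def B_def by (simp_all add: finite_deviation_sets)
  ultimately have "card (Cons 1 ` A \<union> incr_hd ` B) = card A + card B"
    by (simp add: card_Un_disjoint card_image)
  then show ?thesis
    unfolding deviation_sets_Suc_Suc A_def B_def by (simp split: if_splits)
qed

text \<open>The hypothesis is needed: from s < -d a large first part can jump into [-d, d],
  which a walk of unit steps cannot.\<close>
lemma card_deviation_sets:
  "- int d \<le> s \<Longrightarrow> card (deviation_sets d s (Suc n)) = bounded_walks d n (s + 1)"
proof (induction n arbitrary: s)
  case 0
  then show ?case by (simp add: deviation_sets_1)
next
  case (Suc n)
  show ?case
  proof (cases "\<bar>s + 1\<bar> \<le> int d")
    case True
    then have "card (deviation_sets d (- (s + 1)) (Suc n)) = bounded_walks d n (- s)"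
      using Suc.IH[of "- (s + 1)"] by simp
    moreover have "card (deviation_sets d (s + 1) (Suc n)) = bounded_walks d n (s + 2)"
      using Suc.IH[of "s + 1"] Suc.prems by (simp add: add.assoc)
    ultimately show ?thesis
      using True by (simp add: card_deviation_sets_Suc_Suc add.commute add.assoc)
  next
    case False
    then have "int d < s + 1" using Suc.prems by linarith
    then have "card (deviation_sets d (s + 1) (Suc n)) = 0"
      using Suc.IH[of "s + 1"] Suc.prems bounded_walks_outside[of d "s + 2"] by (simp add: add.assoc)
    then show ?thesis
      using False by (simp add: card_deviation_sets_Suc_Suc)
  qed
qed

lemma zeta_eq_bounded_walks:
  assumes "1 \<le> d" and "0 < m"
  shows "zeta m d = bounded_walks d (m - 1) 1"
proof -
  have "{xs. deviation_set m d xs} = deviation_sets d 0 m"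
    unfolding deviation_sets_def deviation_set_def deviation_from_iff[OF assms(1)] by auto
  then show ?thesis
    using card_deviation_sets[of d 0 "m - 1"] assms(2) by (simp add: zeta_def)
qed

text \<open>Unfolding the first steps of a walk from 1: positions beyond d contribute nothing,
  and the symmetry p \<mapsto> -p identifies the remaining terms.\<close>
lemma bounded_walks_1_recurrence: "bounded_walks 1 (n + 2) 1 = 2 * bounded_walks 1 n 1"
  by (simp add: bounded_walks_outside)

lemma bounded_walks_2_recurrence: "bounded_walks 2 (n + 2) 1 = 3 * bounded_walks 2 n 1"
  by (simp add: bounded_walks_outside)

lemma bounded_walks_3_recurrence:
  "bounded_walks 3 (n + 4) 1 + 2 * bounded_walks 3 n 1 = 4 * bounded_walks 3 (n + 2) 1"
  by (simp add: bounded_walks_outside eval_nat_numeral)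

lemma bounded_walks_4_recurrence:
  "bounded_walks 4 (n + 4) 1 + 5 * bounded_walks 4 n 1 = 5 * bounded_walks 4 (n + 2) 1"
  by (simp add: bounded_walks_outside eval_nat_numeral)

lemma bounded_walks_5_recurrence:
  "bounded_walks 5 (n + 6) 1 + 9 * bounded_walks 5 (n + 2) 1
     = 6 * bounded_walks 5 (n + 4) 1 + 2 * bounded_walks 5 n 1"
  by (simp add: bounded_walks_outside eval_nat_numeral)

lemma eq_by_recurrence:
  fixes f g :: "nat \<Rightarrow> 'a"
  assumes init: "\<And>n. n < k \<Longrightarrow> f n = g n"
    and step: "\<And>n. (\<And>i. i < k \<Longrightarrow> f (n + i) = g (n + i)) \<Longrightarrow> f (n + k) = g (n + k)"
  shows "f n = g n"
proof (induction n rule: less_induct)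
  case (less n)
  show ?case
  proof (cases "n < k")
    case False
    then obtain m where "n = m + k" by (metis add.commute le_add_diff_inverse not_less)
    with less.IH show ?thesis using step by (metis add_less_cancel_left)
  qed (rule init)
qed

lemma power_recurrence2:
  fixes r :: "'a::comm_ring_1"
  assumes "r ^ 2 = a * r + b"
  shows "r ^ (n + 2) = a * r ^ (n + 1) + b * r ^ n"
proof -
  have "r ^ (n + 2) = r ^ n * r ^ 2" by (rule power_add)
  also have "\<dots> = r ^ n * (a * r + b)" by (simp only: assms)
  finally show ?thesis by (simp add: algebra_simps power2_eq_square)
qed

lemma power_recurrence3:
  fixes r :: "'a::comm_ring_1"
  assumes "r ^ 3 = a * r ^ 2 + b * r + c"
  shows "r ^ (n + 3) = a * r ^ (n + 2) + b * r ^ (n + 1) + c * r ^ n"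
proof -
  have "r ^ (n + 3) = r ^ n * r ^ 3" by (rule power_add)
  also have "\<dots> = r ^ n * (a * r ^ 2 + b * r + c)" by (simp only: assms)
  finally show ?thesis by (simp add: algebra_simps power2_eq_square)
qed

lemma bounded_walks_1: "bounded_walks 1 n 1 = 2 ^ (n div 2)"
  (is "_ = ?F n")
proof (rule eq_by_recurrence[where f = "\<lambda>n. bounded_walks 1 n 1" and g = ?F and k = 2])
  fix n :: nat
  assume agree: "\<And>i. i < 2 \<Longrightarrow> bounded_walks 1 (n + i) 1 = ?F (n + i)"
  show "bounded_walks 1 (n + 2) 1 = ?F (n + 2)"
    using agree[of 0] unfolding bounded_walks_1_recurrence by simp
qed (auto simp: less_Suc_eq numeral_2_eq_2)

lemma bounded_walks_2: "bounded_walks 2 n 1 = 3 ^ (n div 2)"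
  (is "_ = ?F n")
proof (rule eq_by_recurrence[where f = "\<lambda>n. bounded_walks 2 n 1" and g = ?F and k = 2])
  fix n :: nat
  assume agree: "\<And>i. i < 2 \<Longrightarrow> bounded_walks 2 (n + i) 1 = ?F (n + i)"
  show "bounded_walks 2 (n + 2) 1 = ?F (n + 2)"
    using agree[of 0] unfolding bounded_walks_2_recurrence by simp
qed (auto simp: less_Suc_eq numeral_2_eq_2)

lemma bounded_walks_3:
  "real (bounded_walks 3 n 1)
     = ((2 + sqrt 2) ^ ((n + 2) div 2) + (2 - sqrt 2) ^ ((n + 2) div 2)) / 4"
  (is "_ = ?F n")
proof (rule eq_by_recurrence[where f = "\<lambda>n. real (bounded_walks 3 n 1)" and g = ?F and k = 4])
  show "real (bounded_walks 3 i 1) = ?F i" if "i < 4" for i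
  proof -
    have "i \<in> {0, 1, 2, 3}" using that by auto
    then show ?thesis by (auto simp: power2_eq_square algebra_simps) (simp_all add: eval_nat_numeral)
  qed
next
  fix n :: nat
  assume agree: "\<And>i. i < 4 \<Longrightarrow> real (bounded_walks 3 (n + i) 1) = ?F (n + i)"
  have "real (bounded_walks 3 (n + 4) 1)
      = 4 * real (bounded_walks 3 (n + 2) 1) - 2 * real (bounded_walks 3 n 1)"
    using arg_cong[where f = real, OF bounded_walks_3_recurrence[of n]] by simp
  moreover have "?F (n + 4) = 4 * ?F (n + 2) - 2 * ?F n"
  proof -
    have roots: "(2 + sqrt 2) ^ 2 = 4 * (2 + sqrt 2) + (- 2 :: real)"
      "(2 - sqrt 2) ^ 2 = 4 * (2 - sqrt 2) + (- 2 :: real)"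
      by (simp_all add: power2_eq_square algebra_simps)
    have "(n + 4 + 2) div 2 = (n + 2) div 2 + 2" "(n + 2 + 2) div 2 = (n + 2) div 2 + 1" by simp_all
    then show ?thesis
      by (simp only: power_recurrence2[OF roots(1)] power_recurrence2[OF roots(2)])
        (simp add: field_simps)
  qed
  ultimately show "real (bounded_walks 3 (n + 4) 1) = ?F (n + 4)"
    using agree[of 0] agree[of 2] by (simp only: add_0_right)
qed

lemma bounded_walks_4:
  "real (bounded_walks 4 n 1)
     = (((5 + sqrt 5) / 2) ^ ((n + 2) div 2) + ((5 - sqrt 5) / 2) ^ ((n + 2) div 2)) / 5"
  (is "_ = ?F n")
proof (rule eq_by_recurrence[where f = "\<lambda>n. real (bounded_walks 4 n 1)" and g = ?F and k = 4])
  show "real (bounded_walks 4 i 1) = ?F i" if "i < 4" for i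
  proof -
    have "i \<in> {0, 1, 2, 3}" using that by auto
    then show ?thesis by (auto simp: power2_eq_square field_simps) (simp_all add: eval_nat_numeral)
  qed
next
  fix n :: nat
  assume agree: "\<And>i. i < 4 \<Longrightarrow> real (bounded_walks 4 (n + i) 1) = ?F (n + i)"
  have "real (bounded_walks 4 (n + 4) 1)
      = 5 * real (bounded_walks 4 (n + 2) 1) - 5 * real (bounded_walks 4 n 1)"
    using arg_cong[where f = real, OF bounded_walks_4_recurrence[of n]] by simp
  moreover have "?F (n + 4) = 5 * ?F (n + 2) - 5 * ?F n"
  proof -
    have roots: "((5 + sqrt 5) / 2) ^ 2 = 5 * ((5 + sqrt 5) / 2) + (- 5 :: real)"
      "((5 - sqrt 5) / 2) ^ 2 = 5 * ((5 - sqrt 5) / 2) + (- 5 :: real)"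
      by (simp_all add: power2_eq_square field_simps)
    have "(n + 4 + 2) div 2 = (n + 2) div 2 + 2" "(n + 2 + 2) div 2 = (n + 2) div 2 + 1" by simp_all
    then show ?thesis
      by (simp only: power_recurrence2[OF roots(1)] power_recurrence2[OF roots(2)])
        (simp add: field_simps)
  qed
  ultimately show "real (bounded_walks 4 (n + 4) 1) = ?F (n + 4)"
    using agree[of 0] agree[of 2] by (simp only: add_0_right)
qed

lemma bounded_walks_5:
  "real (bounded_walks 5 n 1)
     = ((2 + sqrt 3) ^ ((n + 2) div 2) + (2 - sqrt 3) ^ ((n + 2) div 2) + 2 ^ ((n + 2) div 2)) / 6"
  (is "_ = ?F n")
proof (rule eq_by_recurrence[where f = "\<lambda>n. real (bounded_walks 5 n 1)" and g = ?F and k = 6])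
  show "real (bounded_walks 5 i 1) = ?F i" if "i < 6" for i
  proof -
    have "i \<in> {0, 1, 2, 3, 4, 5}" using that by auto
    then show ?thesis
      by (auto simp: power2_eq_square power3_eq_cube algebra_simps) (simp_all add: eval_nat_numeral)
  qed
next
  fix n :: nat
  assume agree: "\<And>i. i < 6 \<Longrightarrow> real (bounded_walks 5 (n + i) 1) = ?F (n + i)"
  have "real (bounded_walks 5 (n + 6) 1) = 6 * real (bounded_walks 5 (n + 4) 1)
      - 9 * real (bounded_walks 5 (n + 2) 1) + 2 * real (bounded_walks 5 n 1)"
    using arg_cong[where f = real, OF bounded_walks_5_recurrence[of n]] by simp
  moreover have "?F (n + 6) = 6 * ?F (n + 4) - 9 * ?F (n + 2) + 2 * ?F n"
  proof -
    have roots: "(2 + sqrt 3) ^ 3 = 6 * (2 + sqrt 3) ^ 2 + (- 9) * (2 + sqrt 3) + (2 :: real)"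
      "(2 - sqrt 3) ^ 3 = 6 * (2 - sqrt 3) ^ 2 + (- 9) * (2 - sqrt 3) + (2 :: real)"
      "(2 :: real) ^ 3 = 6 * 2 ^ 2 + (- 9) * 2 + 2"
      by (simp_all add: power2_eq_square power3_eq_cube algebra_simps)
    have "(n + 6 + 2) div 2 = (n + 2) div 2 + 3" "(n + 4 + 2) div 2 = (n + 2) div 2 + 2"
      "(n + 2 + 2) div 2 = (n + 2) div 2 + 1" by simp_all
    then show ?thesis
      by (simp only: power_recurrence3[OF roots(1)] power_recurrence3[OF roots(2)]
          power_recurrence3[OF roots(3)])
        (simp add: field_simps)
  qed
  ultimately show "real (bounded_walks 5 (n + 6) 1) = ?F (n + 6)"
    using agree[of 0] agree[of 2] agree[of 4] by (simp only: add_0_right)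
qed

theorem lemma2:
  fixes m :: nat
  assumes "0 < m"
  shows "zeta m 1 = 2 ^ ((m - 1) div 2) \<and>
    zeta m 2 = 3 ^ ((m - 1) div 2) \<and>
    real (zeta m 3) = ((2 + sqrt 2) ^ ((m + 1) div 2) + (2 - sqrt 2) ^ ((m + 1) div 2)) / 4 \<and>
    real (zeta m 4) = (((5 + sqrt 5) / 2) ^ ((m + 1) div 2) + ((5 - sqrt 5) / 2) ^ ((m + 1) div 2)) / 5 \<and>
    real (zeta m 5) = ((2 + sqrt 3) ^ ((m + 1) div 2) + (2 - sqrt 3) ^ ((m + 1) div 2) + 2 ^ ((m + 1) div 2)) / 6"
proof -
  have "zeta m d = bounded_walks d (m - 1) 1" if "1 \<le> d" for d
    using zeta_eq_bounded_walks[OF that assms] .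
  then have "zeta m 1 = bounded_walks 1 (m - 1) 1" "zeta m 2 = bounded_walks 2 (m - 1) 1"
    "zeta m 3 = bounded_walks 3 (m - 1) 1" "zeta m 4 = bounded_walks 4 (m - 1) 1"
    "zeta m 5 = bounded_walks 5 (m - 1) 1"
    by simp_all
  moreover have "(m - 1 + 2) div 2 = (m + 1) div 2"
    using assms by simp
  ultimately show ?thesis
    using bounded_walks_1[of "m - 1"] bounded_walks_2[of "m - 1"] bounded_walks_3[of "m - 1"]
      bounded_walks_4[of "m - 1"] bounded_walks_5[of "m - 1"]
    by (simp only:)
qed

end
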